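(* Let $K$ be a field containing $\mathbb{F}_q$ and let $B\in\mathrm{GL}_n(K)$, and set $B^*=(B^{-1})^T$. Then the systems $BX^{(q)}=X$ and $B^*X^{(q)}=X$ have the same splitting field over $K$.
   Context: $X^{(q)}$ denotes entrywise $q$-th power. The splitting field over $K$ of the system $CX^{(q)}=X$ (for $C\in\mathrm{GL}_n(K)$) is the subfield of a separable closure $K_{\mathrm{sep}}$ generated over $K$ by the coordinates of all solutions $X\in K_{\mathrm{sep}}^n$. *)

theory Defs
  imports "HOL-Analysis.Analysis" "HOL-Computational_Algebra.Polynomial"
begin

definition is_subfield :: "'a::field set \<Rightarrow> bool" where
  "is_subfield F \<longleftrightarrow> 0 \<in> F \<and> 1 \<in> F \<and>
     (\<forall>x\<in>F. \<forall>y\<in>F. x + y \<in> F \<and> x - y \<in> F \<and> x * y \<in> F) \<and>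
     (\<forall>x\<in>F. inverse x \<in> F)"

definition gen_field :: "'a::field set \<Rightarrow> 'a set" where
  "gen_field S = \<Inter>{F. is_subfield F \<and> S \<subseteq> F}"

definition separable_poly :: "'a::field poly \<Rightarrow> bool" where
  "separable_poly p \<longleftrightarrow> coprime p (pderiv p)"

text \<open>The whole ambient field (UNIV of type 'a) is a separable closure of K:
  it is separably closed, and every element is algebraic and separable over K.\<close>
definition is_separable_closure_of :: "'a::field set \<Rightarrow> bool" where
  "is_separable_closure_of K \<longleftrightarrow> is_subfield K \<and>
     (\<forall>p::'a poly. degree p > 0 \<and> separable_poly p \<longrightarrow> (\<exists>x. poly p x = 0)) \<and>
     (\<forall>x::'a. \<exists>p. p \<noteq> 0 \<and> (\<forall>i. coeff p i \<in> K) \<and> separable_poly p \<and> poly p x = 0)"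

definition qpow :: "nat \<Rightarrow> 'a::field ^ 'n \<Rightarrow> 'a ^ 'n" where
  "qpow q X = (\<chi> i. (X $ i) ^ q)"

definition splitting_field ::
  "'a::field set \<Rightarrow> nat \<Rightarrow> 'a ^ 'n ^ 'n \<Rightarrow> 'a set" where
  "splitting_field K q C =
     gen_field (K \<union> {X $ i | X i. C *v qpow q X = X})"

end

theory Submission
  imports Defs
begin

text \<open>
  The map phi X = B X^(q) is a bijective q-semilinear map of K_sep^n, and by Lang's theorem
  its fixed points span K_sep^n: given fixed points spanning V, a proper subspace, and w outside V,
  the first linear dependency among w, phi w, phi^2 w, ... modulo V turns the search for a new
  fixed point into finding a nonzero root of a separable polynomial, and the remaining error
  in V is absorbed by solving Artin-Schreier equations t^q - t = c.

  If g = B g^(q) and Y = B^* Y^(q), then (g^T Y)^q = (B^-1 g)^T (B^T Y) = g^T Y, so g^T Y lies in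
  F_q. Taking for g the columns of an invertible matrix U of fixed points, U^T Y has entries in
  F_q, and Cramer's rule puts the entries of Y into the splitting field of B. The reverse
  inclusion is the same argument for B^*, since B^** = B.
\<close>

lemma is_subfield_sum:
  assumes G: "is_subfield G" and "\<And>i. i \<in> I \<Longrightarrow> f i \<in> G"
  shows "sum f I \<in> G"
  using assms(2)
proof (induction I rule: infinite_finite_induct)
  case (insert x I)
  then show ?case using G by (simp add: is_subfield_def)
qed (use G in \<open>simp_all add: is_subfield_def\<close>)

lemma is_subfield_prod:
  assumes G: "is_subfield G" and "\<And>i. i \<in> I \<Longrightarrow> f i \<in> G"
  shows "prod f I \<in> G"
  using assms(2)
proof (induction I rule: infinite_finite_induct)
  case (insert x I)
  then show ?case using G by (simp add: is_subfield_def)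
qed (use G in \<open>simp_all add: is_subfield_def\<close>)

lemma is_subfield_divide: "is_subfield G \<Longrightarrow> x \<in> G \<Longrightarrow> y \<in> G \<Longrightarrow> x / y \<in> G"
  by (simp add: is_subfield_def divide_inverse)

lemma is_subfield_det:
  fixes A :: "'a::field^'n^'n"
  assumes G: "is_subfield G" and A: "\<And>i j. A $ i $ j \<in> G"
  shows "det A \<in> G"
proof -
  have "(0::'a) - 1 \<in> G" using G unfolding is_subfield_def by blast
  then have sign: "of_int (sign p) \<in> G" for p :: "'n \<Rightarrow> 'n"
    using G by (auto simp: sign_def is_subfield_def)
  have "of_int (sign p) * (\<Prod>i\<in>UNIV. A $ i $ p i) \<in> G" for p :: "'n \<Rightarrow> 'n"
    using sign[of p] is_subfield_prod[OF G, of UNIV "\<lambda>i. A $ i $ p i"] A G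
    by (simp add: is_subfield_def)
  then show ?thesis
    unfolding det_def by (intro is_subfield_sum[OF G])
qed

lemma matrix_vector_mult_solution_in_subfield:
  fixes A :: "'a::field^'n^'n"
  assumes G: "is_subfield G" and A: "\<And>i j. A $ i $ j \<in> G" and "invertible A"
    and b: "\<And>i. b $ i \<in> G" and "A *v x = b"
  shows "x $ k \<in> G"
proof -
  have "det A \<noteq> 0" using \<open>invertible A\<close> by (simp add: invertible_det_nz)
  then have x: "x $ k = det (\<chi> i j. if j = k then b $ i else A $ i $ j) / det A"
    using cramer[of A x b] \<open>A *v x = b\<close> by simp
  have "det (\<chi> i j. if j = k then b $ i else A $ i $ j) \<in> G"
    using A b by (intro is_subfield_det[OF G]) simp
  then show ?thesis
    unfolding x using is_subfield_det[OF G A] by (rule is_subfield_divide[OF G])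
qed

lemma is_subfield_gen_field: "is_subfield (gen_field S)"
  unfolding gen_field_def is_subfield_def by auto

lemma gen_field_superset: "S \<subseteq> gen_field S"
  unfolding gen_field_def by auto

lemma gen_field_least: "is_subfield F \<Longrightarrow> S \<subseteq> F \<Longrightarrow> gen_field S \<subseteq> F"
  unfolding gen_field_def by auto

lemma is_subfield_splitting_field: "is_subfield (splitting_field K q C)"
  unfolding splitting_field_def by (rule is_subfield_gen_field)

lemma subset_splitting_field: "K \<subseteq> splitting_field K q C"
  unfolding splitting_field_def by (rule subset_trans[OF _ gen_field_superset]) simp

lemma solution_in_splitting_field:
  assumes "C *v qpow q X = X"
  shows "X $ i \<in> splitting_field K q C"
proof -
  have "X $ i \<in> K \<union> {Y $ j | Y j. C *v qpow q Y = Y}" using assms by auto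
  then show ?thesis unfolding splitting_field_def using gen_field_superset by (rule subsetD[rotated])
qed

lemma splitting_field_least:
  assumes "is_subfield G" and "K \<subseteq> G" and "\<And>X i. C *v qpow q X = X \<Longrightarrow> X $ i \<in> G"
  shows "splitting_field K q C \<subseteq> G"
  unfolding splitting_field_def using assms(3) by (intro gen_field_least[OF assms(1)]) (use assms(2) in blast)

lemma matrix_inv_mult:
  fixes A :: "'a::semiring_1^'n^'n"
  assumes "invertible A"
  shows "A ** matrix_inv A = mat 1" and "matrix_inv A ** A = mat 1"
  using someI_ex[OF assms[unfolded invertible_def]] by (simp_all add: matrix_inv_def)

lemma invertible_matrix_inv: "invertible A \<Longrightarrow> invertible (matrix_inv A)"
  for A :: "'a::semiring_1^'n^'n"
  using matrix_inv_mult unfolding invertible_def by blast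

lemma invertible_transpose: "invertible A \<Longrightarrow> invertible (transpose A)"
  for A :: "'a::comm_semiring_1^'n^'n"
  unfolding invertible_def by (metis matrix_transpose_mul transpose_mat)

lemma card_le_CARD_if_independent:
  "vec.independent (S :: ('a::field^'n) set) \<Longrightarrow> card S \<le> CARD('n)"
  using vec.independent_card_le_dim[OF subset_UNIV] by (simp add: card_cart_basis)

lemma span_image_eq_range_sum:
  fixes W :: "'i \<Rightarrow> 'a::field^'n"
  assumes "finite I"
  shows "vec.span (W ` I) = range (\<lambda>a. \<Sum>k\<in>I. a k *s W k)"
proof
  show "range (\<lambda>a. \<Sum>k\<in>I. a k *s W k) \<subseteq> vec.span (W ` I)"
    by (clarify, intro vec.span_sum vec.span_scale vec.span_base imageI)
  have "vec.subspace (range (\<lambda>a. \<Sum>k\<in>I. a k *s W k))"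
    unfolding vec.subspace_def
  proof (intro conjI ballI allI)
    show "0 \<in> range (\<lambda>a. \<Sum>k\<in>I. a k *s W k)"
      by (rule range_eqI[where x = "\<lambda>_. 0"]) simp
  next
    fix x y assume "x \<in> range (\<lambda>a. \<Sum>k\<in>I. a k *s W k)" "y \<in> range (\<lambda>a. \<Sum>k\<in>I. a k *s W k)"
    then obtain a b where "x = (\<Sum>k\<in>I. a k *s W k)" "y = (\<Sum>k\<in>I. b k *s W k)" by blast
    then show "x + y \<in> range (\<lambda>a. \<Sum>k\<in>I. a k *s W k)"
      by (intro range_eqI[where x = "\<lambda>k. a k + b k"]) (simp add: vector_sadd_rdistrib sum.distrib)
  next
    fix c x assume "x \<in> range (\<lambda>a. \<Sum>k\<in>I. a k *s W k)"
    then obtain a where "x = (\<Sum>k\<in>I. a k *s W k)" by blast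
    then show "c *s x \<in> range (\<lambda>a. \<Sum>k\<in>I. a k *s W k)"
      by (intro range_eqI[where x = "\<lambda>k. c * a k"]) (simp add: vec.scale_sum_right)
  qed
  moreover have "W ` I \<subseteq> range (\<lambda>a. \<Sum>k\<in>I. a k *s W k)"
  proof
    fix w assume "w \<in> W ` I"
    then obtain j where "j \<in> I" "w = W j" by blast
    then show "w \<in> range (\<lambda>a. \<Sum>k\<in>I. a k *s W k)"
      using assms by (intro range_eqI[where x = "\<lambda>k. if k = j then 1 else 0"])
        (simp add: if_distrib[of "\<lambda>t. t *s _"] cong: if_cong)
  qed
  ultimately show "vec.span (W ` I) \<subseteq> range (\<lambda>a. \<Sum>k\<in>I. a k *s W k)"
    by (rule vec.span_minimal[rotated])
qed

lemma exists_first_dependent: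
  fixes W :: "nat \<Rightarrow> 'a::field^'n"
  assumes S: "vec.independent S" and W0: "W 0 \<notin> vec.span S"
  shows "\<exists>m. W m \<notin> vec.span (S \<union> W ` {..<m}) \<and> W (Suc m) \<in> vec.span (S \<union> W ` {..<Suc m})"
proof -
  let ?T = "\<lambda>N. S \<union> W ` {..<N}"
  have "\<exists>N. W N \<in> vec.span (?T N)"
  proof (rule ccontr)
    assume none: "\<nexists>N. W N \<in> vec.span (?T N)"
    have "vec.independent (?T N) \<and> card (?T N) = card S + N" for N
    proof (induction N)
      case 0
      show ?case using S by simp
    next
      case (Suc N)
      have span: "W N \<notin> vec.span (?T N)" using none by blast
      have ind: "vec.independent (?T N)" and card: "card (?T N) = card S + N" using Suc.IH by auto
      have "?T (Suc N) = insert (W N) (?T N)" by (simp add: lessThan_Suc)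
      moreover have "W N \<notin> ?T N" using span vec.span_base[of "W N" "?T N"] by (rule contrapos_nn)
      moreover have "finite (?T N)" using vec.finiteI_independent[OF ind] .
      ultimately show ?case using vec.independent_insertI[OF span ind] card by simp
    qed
    from this[of "Suc CARD('n)"] show False
      using card_le_CARD_if_independent[of "?T (Suc CARD('n))"] by linarith
  qed
  define d where "d = (LEAST N. W N \<in> vec.span (?T N))"
  have d: "W d \<in> vec.span (?T d)" unfolding d_def by (rule LeastI_ex) fact
  obtain m where m: "d = Suc m" using d W0 by (cases d) auto
  have "m < d" using m by simp
  then have "W m \<notin> vec.span (?T m)" unfolding d_def by (rule not_less_Least)
  then show ?thesis using d m by blast
qed

lemma sum_not_in_span_if_last_coeff_nonzero:
  fixes W :: "nat \<Rightarrow> 'a::field^'n"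
  assumes W: "W m \<notin> vec.span (S \<union> W ` {..<m})" and "c m \<noteq> 0"
  shows "(\<Sum>k<Suc m. c k *s W k) \<notin> vec.span S"
proof
  let ?T = "S \<union> W ` {..<m}"
  assume "(\<Sum>k<Suc m. c k *s W k) \<in> vec.span S"
  then have "(\<Sum>k<Suc m. c k *s W k) \<in> vec.span ?T" using vec.span_mono[of S ?T] by blast
  moreover have "(\<Sum>k<m. c k *s W k) \<in> vec.span ?T"
    by (intro vec.span_sum vec.span_scale vec.span_base) auto
  ultimately have "c m *s W m \<in> vec.span ?T" using vec.span_diff by fastforce
  then have "(1 / c m) *s (c m *s W m) \<in> vec.span ?T" by (rule vec.span_scale)
  then show False using W \<open>c m \<noteq> 0\<close> by (simp add: vector_smult_assoc)
qed

definition qpow_mat :: "nat \<Rightarrow> 'a::field^'n^'m \<Rightarrow> 'a^'n^'m" where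
  "qpow_mat q A = (\<chi> i j. (A $ i $ j) ^ q)"

text \<open>If \<open>W (m + 1) = s + (\<Sum>k\<le>m. a k *s W k)\<close> and \<open>W (k + 1) = \<phi> (W k)\<close> for a \<open>q\<close>-semilinear \<open>\<phi>\<close>,
  then \<open>z = (\<Sum>k\<le>m. x k *s W k)\<close> with \<open>x k = poly (krylov_poly a q k) y\<close> satisfies
  \<open>\<phi> z = z + y ^ q *s s\<close> as soon as \<open>x m = y\<close>: the recursion is the comparison of coefficients.\<close>

fun krylov_poly :: "(nat \<Rightarrow> 'a::field) \<Rightarrow> nat \<Rightarrow> nat \<Rightarrow> 'a poly" where
  "krylov_poly a q 0 = smult (a 0) (monom 1 q)"
| "krylov_poly a q (Suc k) = krylov_poly a q k ^ q + smult (a (Suc k)) (monom 1 q)"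

locale finite_subfield =
  fixes F :: "'a::field set" and q :: nat
  assumes is_subfield: "is_subfield F" and finite: "finite F" and card: "card F = q"
begin

lemma q_ge_2: "q \<ge> 2"
proof -
  have "{0, 1} \<subseteq> F" using is_subfield by (simp add: is_subfield_def)
  then have "card {0::'a, 1} \<le> q" using card_mono[OF finite] card by blast
  then show ?thesis by simp
qed

lemma of_nat_q_eq_0: "of_nat q = (0::'a)"
proof -
  have "bij_betw (\<lambda>x. x + 1) F F"
  proof (rule bij_betw_byWitness[where f' = "\<lambda>x. x - 1"])
    show "(\<lambda>x. x + 1) ` F \<subseteq> F" "(\<lambda>x. x - 1) ` F \<subseteq> F"
      using is_subfield by (auto simp: is_subfield_def)
  qed auto
  then have "(\<Sum>x\<in>F. x + 1) = (\<Sum>x\<in>F. x)"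
    using sum.reindex_bij_betw[of "\<lambda>x. x + 1" F F "\<lambda>x. x"] by simp
  then show ?thesis by (simp add: sum.distrib card)
qed

lemma power_q_eq_self: "x \<in> F \<Longrightarrow> x ^ q = x"
proof (cases "x = 0")
  case True
  then show ?thesis using q_ge_2 by simp
next
  case False
  assume x: "x \<in> F"
  let ?F' = "F - {0}"
  have "bij_betw (\<lambda>y. x * y) ?F' ?F'"
  proof (rule bij_betw_byWitness[where f' = "\<lambda>y. inverse x * y"])
    show "(\<lambda>y. x * y) ` ?F' \<subseteq> ?F'" "(\<lambda>y. inverse x * y) ` ?F' \<subseteq> ?F'"
      using is_subfield x False by (auto simp: is_subfield_def)
  qed (use False in auto)
  then have "(\<Prod>y\<in>?F'. x * y) = (\<Prod>y\<in>?F'. y)"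
    using prod.reindex_bij_betw[of "\<lambda>y. x * y" ?F' ?F' "\<lambda>y. y"] by simp
  moreover have "card ?F' = q - 1" using card finite is_subfield by (simp add: is_subfield_def)
  moreover have "(\<Prod>y\<in>?F'. y) \<noteq> 0" using finite by simp
  ultimately have "x ^ (q - 1) = 1" by (simp add: prod.distrib)
  moreover obtain m where "q = Suc m" using q_ge_2 by (cases q) auto
  ultimately show ?thesis by simp
qed

lemma mem_if_power_q_eq_self:
  assumes "x ^ q = x"
  shows "x \<in> F"
proof (rule ccontr)
  assume x: "x \<notin> F"
  let ?p = "monom (1::'a) q + [:0, -1:]"
  have "degree ?p = q" using q_ge_2
    by (subst degree_add_eq_left) (auto simp: degree_monom_eq)
  then have p: "?p \<noteq> 0" using q_ge_2 by auto
  have "insert x F \<subseteq> {y. poly ?p y = 0}"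
    using assms power_q_eq_self by (auto simp: poly_monom)
  then have "card (insert x F) \<le> card {y. poly ?p y = 0}"
    using poly_roots_finite[OF p] by (intro card_mono)
  also have "\<dots> \<le> q" using card_poly_roots_bound[OF p] \<open>degree ?p = q\<close> by simp
  finally show False using x finite card by simp
qed

text \<open>The polynomial \<open>(t + 1)^q - t^q - 1\<close> has degree less than \<open>q\<close> but vanishes on all of \<open>F\<close>.\<close>

lemma power_q_add_1: "(t + 1) ^ q = t ^ q + (1::'a)"
proof -
  let ?r = "[:1, 1:] ^ q - monom (1::'a) q - 1"
  have deg: "degree ([:1, 1:] ^ q :: 'a poly) = q"
    by (simp add: degree_power_eq)
  have "coeff ([:1, 1:] ^ q :: 'a poly) q = 1"
    using lead_coeff_power[of "[:1, 1::'a:]" q] deg by simp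
  then have "degree ?r < q"
    using deg q_ge_2 by (intro degree_lessI) (auto simp: coeff_eq_0)
  moreover have "poly ?r t = 0" if "t \<in> F" for t
  proof -
    have "t + 1 \<in> F" using that is_subfield by (simp add: is_subfield_def)
    then show ?thesis using that power_q_eq_self by (simp add: poly_monom add.commute)
  qed
  ultimately have "?r = 0"
    using card by (intro poly_eqI_degree[of F]) auto
  then have "poly ?r t = 0" by simp
  then show ?thesis by (simp add: poly_monom algebra_simps)
qed

lemma power_q_add: "(a + b) ^ q = a ^ q + (b ^ q :: 'a)"
proof (cases "b = 0")
  case True
  then show ?thesis using q_ge_2 by simp
next
  case False
  have "a + b = b * (a / b + 1)" using False by (simp add: field_simps)
  then have "(a + b) ^ q = (b * (a / b + 1)) ^ q" by simp
  also have "\<dots> = b ^ q * ((a / b) ^ q + 1)" by (simp add: power_mult_distrib power_q_add_1)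
  also have "\<dots> = a ^ q + b ^ q" using False by (simp add: field_simps power_divide)
  finally show ?thesis .
qed

lemma power_q_sum: "(\<Sum>i\<in>I. f i) ^ q = (\<Sum>i\<in>I. f i ^ q :: 'a)"
  using q_ge_2 by (induction I rule: infinite_finite_induct) (simp_all add: power_q_add)

lemma qpow_add: "qpow q (x + y) = qpow q x + qpow q (y :: 'a^'n)"
  by (simp add: qpow_def vec_eq_iff power_q_add)

lemma qpow_scalar_mult: "qpow q (c *s x) = c ^ q *s qpow q (x :: 'a^'n)"
  by (simp add: qpow_def vec_eq_iff power_mult_distrib)

lemma qpow_zero: "qpow q (0 :: 'a^'n) = 0"
  using q_ge_2 by (simp add: qpow_def vec_eq_iff)

lemma qpow_eq_0_iff: "qpow q (x :: 'a^'n) = 0 \<longleftrightarrow> x = 0"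
  using q_ge_2 by (simp add: qpow_def vec_eq_iff)

lemma qpow_matrix_vector_mult: "qpow q (A *v x) = qpow_mat q A *v qpow q (x :: 'a^'n)"
  by (simp add: qpow_def qpow_mat_def vec_eq_iff matrix_vector_mult_def power_q_sum power_mult_distrib)

text \<open>A linear form vanishing on \<open>S\<close> but not at \<open>v\<close> survives the Frobenius twist: its entrywise
  \<open>q\<close>-th power kills \<open>qpow q ` S\<close> but not \<open>qpow q v\<close>.\<close>

lemma in_span_if_qpow_in_span:
  fixes S :: "('a^'n) set"
  assumes S: "vec.independent S" and qv: "qpow q v \<in> vec.span (qpow q ` S)"
  shows "v \<in> vec.span S"
proof (rule ccontr)
  assume v: "v \<notin> vec.span S"
  then have "v \<notin> S" using vec.span_base by blast
  obtain i :: 'n where True by blast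
  obtain g where g: "Vector_Spaces.linear (*s) (*s) g"
    and g_on: "\<forall>x\<in>insert v S. g x = (if x = v then axis i (1::'a) else 0)"
    using vec.linear_independent_extend[OF vec.independent_insertI[OF v S],
        of "\<lambda>x. if x = v then axis i 1 else 0"] by blast
  have gv: "g v = axis i 1" and gS: "\<And>u. u \<in> S \<Longrightarrow> g u = 0"
    using g_on \<open>v \<notin> S\<close> by auto
  have Mg: "matrix g *v x = g x" for x using matrix_works[OF g] .
  have "qpow_mat q (matrix g) *v w = 0" if "w \<in> qpow q ` S" for w
    using that gS by (auto simp: qpow_matrix_vector_mult[symmetric] Mg qpow_zero)
  then have "qpow_mat q (matrix g) *v qpow q v = 0"
    using qv by (rule vec.linear_eq_0_on_span[OF matrix_vector_mul_linear_gen])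
  then have "g v = 0" by (simp add: qpow_matrix_vector_mult[symmetric] Mg qpow_eq_0_iff)
  then show False using gv by (simp add: axis_eq_0_iff)
qed

lemma sum_matrix_vector_mult_pairing:
  "(\<Sum>i\<in>UNIV. (A *v x) $ i * y $ i) = (\<Sum>j\<in>UNIV. x $ j * (transpose A *v y) $ j)"
  for A :: "'a^'n^'m"
  by (simp add: matrix_vector_mult_def transpose_def sum_distrib_left sum_distrib_right
      algebra_simps sum.swap[of _ "UNIV :: 'm set"])

lemma dual_fixed_points_pairing_in_subfield:
  fixes C D :: "'a^'n^'n"
  assumes CD: "transpose C ** D = mat 1" and g: "C *v qpow q g = g" and Y: "D *v qpow q Y = Y"
  shows "(\<Sum>i\<in>UNIV. g $ i * Y $ i) \<in> F"
proof (rule mem_if_power_q_eq_self)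
  have "(\<Sum>i\<in>UNIV. g $ i * Y $ i) = (\<Sum>i\<in>UNIV. (C *v qpow q g) $ i * (D *v qpow q Y) $ i)"
    using g Y by simp
  also have "\<dots> = (\<Sum>j\<in>UNIV. qpow q g $ j * ((transpose C ** D) *v qpow q Y) $ j)"
    by (simp add: sum_matrix_vector_mult_pairing matrix_vector_mul_assoc)
  also have "\<dots> = (\<Sum>i\<in>UNIV. g $ i * Y $ i) ^ q"
    by (simp add: CD qpow_def power_q_sum power_mult_distrib)
  finally show "(\<Sum>i\<in>UNIV. g $ i * Y $ i) ^ q = (\<Sum>i\<in>UNIV. g $ i * Y $ i)" by simp
qed

lemma pderiv_krylov_poly: "pderiv (krylov_poly a q k :: 'a poly) = 0"
  by (induction k) (simp_all add: pderiv_smult pderiv_monom pderiv_add pderiv_power of_nat_q_eq_0)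

lemma poly_krylov_poly_0: "poly (krylov_poly a q k :: 'a poly) 0 = 0"
  using q_ge_2 by (induction k) (simp_all add: poly_monom power_0_left)

lemma krylov_poly_eq_0: "(\<And>j. j \<le> k \<Longrightarrow> a j = 0) \<Longrightarrow> krylov_poly a q k = (0 :: 'a poly)"
  using q_ge_2 by (induction k) simp_all

lemma degree_krylov_poly:
  assumes "\<exists>j\<le>k. a j \<noteq> (0::'a)"
  shows "q \<le> degree (krylov_poly a q k)"
  using assms
proof (induction k)
  case 0
  then show ?case by (simp add: degree_monom_eq)
next
  case (Suc k)
  let ?p = "krylov_poly a q k" and ?m = "smult (a (Suc k)) (monom 1 q)"
  show ?case
  proof (cases "\<exists>j\<le>k. a j \<noteq> 0")
    case True
    then have "q \<le> degree ?p" by (rule Suc.IH)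
    moreover have "?p \<noteq> 0" using \<open>q \<le> degree ?p\<close> q_ge_2 by auto
    ultimately have "q * q \<le> degree (?p ^ q)" by (simp add: degree_power_eq)
    moreover have "q < q * q" using q_ge_2 by simp
    moreover have "degree ?m \<le> q" by (rule order.trans[OF degree_smult_le degree_monom_le])
    ultimately have "degree (?p ^ q + ?m) = degree (?p ^ q)" by (intro degree_add_eq_left) linarith
    then show ?thesis using \<open>q * q \<le> degree (?p ^ q)\<close> \<open>q < q * q\<close>
      unfolding krylov_poly.simps by linarith
  next
    case False
    then have "?p = 0" and "a (Suc k) \<noteq> 0"
      using krylov_poly_eq_0[of k a] Suc.prems by (auto simp: le_Suc_eq)
    then show ?thesis using q_ge_2 by (simp add: degree_monom_eq power_0_left)
  qed
qed

end

locale finite_subfield_of_sep_closed = finite_subfield F q for F :: "'a::field set" and q +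
  assumes sep_closed: "\<And>p :: 'a poly. 0 < degree p \<Longrightarrow> separable_poly p \<Longrightarrow> \<exists>x. poly p x = 0"
begin

lemma artin_schreier_solvable: "\<exists>t. t ^ q - t = (c::'a)"
proof -
  let ?p = "monom (1::'a) q + [:-c, -1:]"
  have "degree ?p = q" using q_ge_2
    by (subst degree_add_eq_left) (auto simp: degree_monom_eq)
  moreover have "pderiv ?p = [:-1:]"
    by (simp add: pderiv_add pderiv_monom of_nat_q_eq_0 pderiv_pCons)
  then have "separable_poly ?p" unfolding separable_poly_def
    by (intro is_unit_right_imp_coprime) (simp add: is_unit_pCons_iff)
  moreover have "0 < q" using q_ge_2 by simp
  ultimately obtain t where "poly ?p t = 0" using sep_closed[of ?p] by auto
  then show ?thesis by (intro exI[of _ t]) (simp add: poly_monom algebra_simps)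
qed

lemma krylov_poly_nonzero_fixed_point:
  assumes "\<exists>j\<le>k. a j \<noteq> (0::'a)"
  shows "\<exists>y. y \<noteq> 0 \<and> poly (krylov_poly a q k) y = y"
proof -
  let ?P = "krylov_poly a q k"
  have "[:0, 1:] dvd ?P" using poly_krylov_poly_0 by (simp add: dvd_iff_poly_eq_0)
  then obtain R where P: "?P = [:0, 1:] * R" by (elim dvdE)
  define Q where "Q = R - 1"
  have "R + [:0, 1:] * pderiv R = 0"
    using pderiv_krylov_poly[of a k] unfolding P by (simp add: pderiv_mult pderiv_pCons)
  then have Q_id: "Q + [:0, 1:] * pderiv Q = -1" unfolding Q_def by (simp add: pderiv_diff algebra_simps)
  have "separable_poly Q" unfolding separable_poly_def
  proof (rule coprimeI)
    fix d assume "d dvd Q" "d dvd pderiv Q"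
    then have "d dvd Q + [:0, 1:] * pderiv Q" by (intro dvd_add dvd_mult)
    then show "is_unit d" using Q_id by simp
  qed
  moreover have "0 < degree Q"
  proof -
    have "q \<le> degree ?P" using degree_krylov_poly[OF assms] .
    then have "1 \<le> degree R" using q_ge_2 degree_mult_le[of "[:0, 1:]" R] unfolding P by simp
    then show ?thesis unfolding Q_def using degree_add_eq_left[of "- 1" R] by simp
  qed
  ultimately obtain y where y: "poly Q y = 0" using sep_closed by blast
  have "poly Q 0 = -1" using arg_cong[OF Q_id, of "\<lambda>p. poly p 0"] by simp
  then have "y \<noteq> 0" using y by auto
  moreover have "poly ?P y = y" unfolding P using y by (simp add: Q_def)
  ultimately show ?thesis by blast
qed

end

locale lang = finite_subfield_of_sep_closed F q for F :: "'a::field set" and q +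
  fixes C :: "'a^'n^'n"
  assumes invertible_C: "invertible C"
begin

definition phi :: "'a^'n \<Rightarrow> 'a^'n" where
  "phi v = C *v qpow q v"

lemma phi_add: "phi (x + y) = phi x + phi y"
  by (simp add: phi_def qpow_add matrix_vector_right_distrib)

lemma phi_scalar_mult: "phi (c *s x) = c ^ q *s phi x"
  by (simp add: phi_def qpow_scalar_mult vector_scalar_commute)

lemma phi_zero: "phi 0 = 0"
  by (simp add: phi_def qpow_zero)

lemma phi_sum: "phi (\<Sum>i\<in>I. f i) = (\<Sum>i\<in>I. phi (f i))"
  by (induction I rule: infinite_finite_induct) (simp_all add: phi_zero phi_add)

lemma exists_fixed_point_correction:
  assumes S: "finite S" "\<And>u. u \<in> S \<Longrightarrow> phi u = u" and r: "r \<in> vec.span S"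
  shows "\<exists>t\<in>vec.span S. phi t = t + r"
proof -
  obtain c where r_eq: "r = (\<Sum>u\<in>S. c u *s u)" using r vec.span_finite[OF S(1)] by auto
  have "\<forall>u. \<exists>t. t ^ q - t = c u" using artin_schreier_solvable by blast
  then obtain t where t: "\<And>u. t u ^ q - t u = c u" by metis
  have "phi (\<Sum>u\<in>S. t u *s u) = (\<Sum>u\<in>S. t u ^ q *s u)"
    using S by (simp add: phi_sum phi_scalar_mult)
  also have "\<dots> = (\<Sum>u\<in>S. t u *s u) + r"
    unfolding r_eq sum.distrib[symmetric] vector_sadd_rdistrib[symmetric] t[symmetric] by simp
  finally show ?thesis by (intro bexI[of _ "\<Sum>u\<in>S. t u *s u"]) (auto intro: vec.span_sum vec.span_scale vec.span_base)
qed

lemma in_span_if_phi_in_span: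
  assumes S: "vec.independent S" "\<And>u. u \<in> S \<Longrightarrow> phi u = u" and v: "phi v \<in> vec.span S"
  shows "v \<in> vec.span S"
proof -
  obtain C' where C': "C' ** C = mat 1" using invertible_C by (auto simp: invertible_left_inverse)
  have qpow_eq: "qpow q x = C' *v phi x" for x
    by (simp add: phi_def matrix_vector_mul_assoc C')
  then have "qpow q ` S = (*v) C' ` S" using S(2) by (auto simp: image_def)
  then have "vec.span (qpow q ` S) = (*v) C' ` vec.span S" by (simp add: vec.span_image)
  then have "qpow q v \<in> vec.span (qpow q ` S)" using v qpow_eq by simp
  then show ?thesis by (rule in_span_if_qpow_in_span[OF S(1)])
qed

lemma phi_krylov_combination:
  fixes a :: "nat \<Rightarrow> 'a" and y :: 'a and W :: "nat \<Rightarrow> 'a^'n"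
  defines "x \<equiv> \<lambda>k. poly (krylov_poly a q k) y"
  assumes W: "\<And>k. W (Suc k) = phi (W k)" and Wm: "W (Suc m) = s + (\<Sum>k<Suc m. a k *s W k)"
    and y: "x m = y"
  shows "phi (\<Sum>k<Suc m. x k *s W k) = (\<Sum>k<Suc m. x k *s W k) + y ^ q *s s"
proof -
  have x0: "x 0 = a 0 * y ^ q" and xS: "\<And>k. x (Suc k) = x k ^ q + a (Suc k) * y ^ q"
    by (simp_all add: x_def poly_monom)
  have "phi (\<Sum>k<Suc m. x k *s W k) = (\<Sum>k<Suc m. x k ^ q *s W (Suc k))"
    by (simp only: phi_sum phi_scalar_mult W)
  also have "\<dots> = (\<Sum>k<m. x k ^ q *s W (Suc k)) + y ^ q *s W (Suc m)"
    by (simp add: y)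
  also have "y ^ q *s W (Suc m) = y ^ q *s s + (a 0 * y ^ q) *s W 0
      + (\<Sum>k<m. (a (Suc k) * y ^ q) *s W (Suc k))"
    unfolding Wm sum.lessThan_Suc_shift
    by (simp add: vector_add_ldistrib vec.scale_sum_right vector_smult_assoc mult.commute add.assoc)
  finally have "phi (\<Sum>k<Suc m. x k *s W k) = y ^ q *s s + ((a 0 * y ^ q) *s W 0
      + ((\<Sum>k<m. x k ^ q *s W (Suc k)) + (\<Sum>k<m. (a (Suc k) * y ^ q) *s W (Suc k))))"
    by (simp add: algebra_simps)
  also have "(\<Sum>k<m. x k ^ q *s W (Suc k)) + (\<Sum>k<m. (a (Suc k) * y ^ q) *s W (Suc k))
      = (\<Sum>k<m. x (Suc k) *s W (Suc k))"
    by (simp add: xS sum.distrib[symmetric] vector_sadd_rdistrib)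
  also have "(a 0 * y ^ q) *s W 0 + (\<Sum>k<m. x (Suc k) *s W (Suc k)) = (\<Sum>k<Suc m. x k *s W k)"
    unfolding sum.lessThan_Suc_shift by (simp add: x0)
  finally show ?thesis by (simp add: add.commute)
qed

lemma exists_fixed_point_outside_span:
  assumes S: "vec.independent S" "\<And>u. u \<in> S \<Longrightarrow> phi u = u" and w: "w \<notin> vec.span S"
  shows "\<exists>z. phi z = z \<and> z \<notin> vec.span S"
proof -
  define W where "W k = (phi ^^ k) w" for k
  have W_Suc: "W (Suc k) = phi (W k)" for k by (simp add: W_def)
  obtain m where Wm: "W m \<notin> vec.span (S \<union> W ` {..<m})"
    and WSm: "W (Suc m) \<in> vec.span (S \<union> W ` {..<Suc m})"
    using exists_first_dependent[OF S(1), of W] w by (auto simp: W_def)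
  obtain s a where s: "s \<in> vec.span S" and W_rel: "W (Suc m) = s + (\<Sum>k<Suc m. a k *s W k)"
    using WSm by (auto simp: vec.span_Un span_image_eq_range_sum)
  have span_S: "vec.span S \<subseteq> vec.span (S \<union> W ` {..<m})" by (intro vec.span_mono) auto
  have "\<exists>j\<le>m. a j \<noteq> 0"
  proof (rule ccontr)
    assume "\<not> (\<exists>j\<le>m. a j \<noteq> 0)"
    then have "phi (W m) \<in> vec.span S"
      using W_rel s by (simp add: W_Suc less_Suc_eq_le)
    then show False using in_span_if_phi_in_span[OF S] Wm span_S by blast
  qed
  then obtain y where "y \<noteq> 0" and y: "poly (krylov_poly a q m) y = y"
    using krylov_poly_nonzero_fixed_point by blast
  define x where "x k = poly (krylov_poly a q k) y" for k
  define z where "z = (\<Sum>k<Suc m. x k *s W k)"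
  have phi_z: "phi z = z + y ^ q *s s"
    unfolding z_def x_def using W_Suc W_rel y by (rule phi_krylov_combination)
  have "- (y ^ q *s s) \<in> vec.span S" using s by (simp add: vec.span_neg vec.span_scale)
  then obtain t where t: "t \<in> vec.span S" and phi_t: "phi t = t - y ^ q *s s"
    using exists_fixed_point_correction[OF vec.finiteI_independent[OF S(1)] S(2)] by force
  have "phi (z + t) = z + t" using phi_z phi_t by (simp add: phi_add)
  moreover have "z + t \<notin> vec.span S"
  proof
    assume "z + t \<in> vec.span S"
    then have "z \<in> vec.span S" using t vec.span_diff[of "z + t" S t] by simp
    moreover have "x m \<noteq> 0" using y \<open>y \<noteq> 0\<close> by (simp add: x_def)
    ultimately show False
      unfolding z_def using sum_not_in_span_if_last_coeff_nonzero[OF Wm, of x] by blast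
  qed
  ultimately show ?thesis by blast
qed

lemma exists_fixed_basis:
  "\<exists>S. vec.independent S \<and> vec.span S = UNIV \<and> (\<forall>u\<in>S. phi u = u)"
proof -
  have "\<exists>S. vec.independent S \<and> card S = N \<and> (\<forall>u\<in>S. phi u = u)" if "N \<le> CARD('n)" for N
    using that
  proof (induction N)
    case 0
    show ?case by (intro exI[of _ "{}"]) (simp add: vec.independent_empty)
  next
    case (Suc N)
    then obtain S where S: "vec.independent S" "card S = N" "\<forall>u\<in>S. phi u = u" by auto
    have "vec.span S \<noteq> UNIV"
    proof
      assume "vec.span S = UNIV"
      then have "CARD('n) \<le> card S"
        using vec.independent_span_bound[OF vec.finiteI_independent[OF S(1)] independent_cart_basis]
        by (simp add: card_cart_basis)
      then show False using S(2) Suc.prems by simp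
    qed
    then obtain w where "w \<notin> vec.span S" by blast
    then obtain z where z: "phi z = z" "z \<notin> vec.span S"
      using exists_fixed_point_outside_span[of S w] S by blast
    have "z \<notin> S" using z(2) vec.span_base[of z S] by (rule contrapos_nn)
    then show ?case using S z vec.finiteI_independent[OF S(1)]
      by (intro exI[of _ "insert z S"]) (simp add: vec.independent_insertI)
  qed
  then obtain S where S: "vec.independent S" "card S = CARD('n)" "\<forall>u\<in>S. phi u = u" by blast
  have "UNIV \<subseteq> vec.span S" using S by (intro vec.card_ge_dim_independent) (simp_all add: card_cart_basis)
  then show ?thesis using S by blast
qed

lemma exists_fixed_invertible_matrix: "\<exists>U :: 'a^'n^'n. invertible U \<and> (\<forall>j. phi (column j U) = column j U)"
proof -
  obtain S where S: "vec.independent S" "vec.span S = UNIV" "\<forall>u\<in>S. phi u = u"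
    using exists_fixed_basis by blast
  have "card S = CARD('n)"
    using vec.dim_eq_card_independent[OF S(1)] vec.dim_span[of S] S(2) by (simp add: card_cart_basis)
  then obtain g where g: "bij_betw g (UNIV :: 'n set) S"
    using finite_same_card_bij[of "UNIV :: 'n set" S] vec.finiteI_independent[OF S(1)] by auto
  define U :: "'a^'n^'n" where "U = (\<chi> i j. g j $ i)"
  have col: "column j U = g j" for j by (simp add: U_def column_def vec_eq_iff)
  have "columns U = S" using g by (auto simp: columns_def col bij_betw_def)
  then have "invertible U"
    using S(2) matrix_right_invertible_span_columns[of U] by (simp add: invertible_right_inverse)
  moreover have "phi (column j U) = column j U" for j
    using S(3) g by (auto simp: col bij_betw_def)
  ultimately show ?thesis by blast
qed

lemma splitting_field_dual_subset:
  assumes K: "is_subfield K" "F \<subseteq> K" and CD: "transpose C ** D = mat 1"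
  shows "splitting_field K q D \<subseteq> splitting_field K q C"
proof -
  let ?G = "splitting_field K q C"
  have G: "is_subfield ?G" by (rule is_subfield_splitting_field)
  obtain U :: "'a^'n^'n" where U: "invertible U" "\<And>j. phi (column j U) = column j U"
    using exists_fixed_invertible_matrix by blast
  have U_fixed: "C *v qpow q (column j U) = column j U" for j using U(2) by (simp add: phi_def)
  have "Y $ k \<in> ?G" if Y: "D *v qpow q Y = Y" for Y k
  proof (rule matrix_vector_mult_solution_in_subfield[OF G _ _ _ refl])
    show "transpose U $ i $ j \<in> ?G" for i j
      using solution_in_splitting_field[OF U_fixed[of i], of j K] by (simp add: transpose_def column_def)
    show "invertible (transpose U)" using U(1) by (rule invertible_transpose)
    have "(transpose U *v Y) $ j = (\<Sum>i\<in>UNIV. column j U $ i * Y $ i)" for j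
      by (simp add: matrix_vector_mult_def transpose_def column_def)
    moreover have "F \<subseteq> ?G" using K(2) subset_splitting_field by (rule subset_trans)
    ultimately show "(transpose U *v Y) $ j \<in> ?G" for j
      using dual_fixed_points_pairing_in_subfield[OF CD U_fixed Y] by auto
  qed
  then show ?thesis by (intro splitting_field_least[OF G subset_splitting_field])
qed

end

theorem proposition4p3:
  fixes K :: "'a::field set" and q :: nat and B :: "'a ^ 'n ^ 'n"
  assumes "is_separable_closure_of K"
    and "\<exists>F. is_subfield F \<and> F \<subseteq> K \<and> finite F \<and> card F = q"
    and "\<forall>i j. B $ i $ j \<in> K"
    and "invertible B"
  shows "splitting_field K q B = splitting_field K q (transpose (matrix_inv B))"
proof -
  obtain F where F: "is_subfield F" "F \<subseteq> K" "finite F" "card F = q" using assms(2) by blast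
  have K: "is_subfield K" and sep_closed:
    "\<And>p::'a poly. 0 < degree p \<Longrightarrow> separable_poly p \<Longrightarrow> \<exists>x. poly p x = 0"
    using assms(1) unfolding is_separable_closure_of_def by blast+
  define B' where "B' = transpose (matrix_inv B)"
  have "invertible B'" unfolding B'_def using assms(4) by (intro invertible_transpose invertible_matrix_inv)
  interpret B: lang F q B using F sep_closed assms(4) by unfold_locales
  interpret B': lang F q B' using F sep_closed \<open>invertible B'\<close> by unfold_locales
  have "transpose B ** B' = mat 1" and "transpose B' ** B = mat 1"
    unfolding B'_def using matrix_inv_mult[OF assms(4)] by (simp_all flip: matrix_transpose_mul)
  then show ?thesis
    unfolding B'_def[symmetric]
    using B.splitting_field_dual_subset[OF K F(2)] B'.splitting_field_dual_subset[OF K F(2)] by blast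
qed

end
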